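(* Let $A,B$ be unital $k$-algebras and $f:B\to A$ an algebra homomorphism, not necessarily unital, such that $f(1_B)$ lies in the center of $A$. Then the modulation of $f$ is invertible in $\mathsf{Alg}$ if and only if $f$ is an isomorphism from $B$ onto $A\cdot f(1_B)$ and $f(1_B)$ is not a zero divisor in $A$.
   Context: $k$ is a commutative ring; all algebras are unital $k$-algebras. The category $\mathsf{Alg}$ has unital $k$-algebras as objects and, as morphisms to $A$ from $B$, isomorphism classes of biunital $(A,B)$-bimodules, composed by $X\otimes_B Y$; invertible morphisms are Morita equivalences. The modulation of a not necessarily unital homomorphism $f:B\to A$ is the left ideal $A\cdot f(1_B)\subset A$ with the biunital $(A,B)$-bimodule structure $a\cdot x\cdot b=a\,x\,f(b)$. *)

theory Defs
  imports Main "HOL-Library.Function_Algebras"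
begin

definition k_algebra :: "('k::comm_ring_1 \<Rightarrow> 'a::ring_1) \<Rightarrow> bool" where
  "k_algebra \<iota> \<longleftrightarrow> \<iota> 1 = 1 \<and> (\<forall>c d. \<iota> (c + d) = \<iota> c + \<iota> d) \<and> (\<forall>c d. \<iota> (c * d) = \<iota> c * \<iota> d)
     \<and> (\<forall>c a. \<iota> c * a = a * \<iota> c)"

definition alg_hom_nonunital :: "('k::comm_ring_1 \<Rightarrow> 'a::ring_1) \<Rightarrow> ('k \<Rightarrow> 'b::ring_1) \<Rightarrow> ('b \<Rightarrow> 'a) \<Rightarrow> bool" where
  "alg_hom_nonunital \<iota>A \<iota>B f \<longleftrightarrow> (\<forall>x y. f (x + y) = f x + f y) \<and> (\<forall>x y. f (x * y) = f x * f y)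
     \<and> (\<forall>c x. f (\<iota>B c * x) = \<iota>A c * f x)"

text \<open>A biunital, k-central (R,S)-bimodule with carrier X, a subgroup of an abelian group type.
  R and S are unital k-algebras given by their structure maps.\<close>
definition bimod :: "('k::comm_ring_1 \<Rightarrow> 'r::ring_1) \<Rightarrow> ('k \<Rightarrow> 's::ring_1) \<Rightarrow> 'x::ab_group_add set
     \<Rightarrow> ('r \<Rightarrow> 'x \<Rightarrow> 'x) \<Rightarrow> ('x \<Rightarrow> 's \<Rightarrow> 'x) \<Rightarrow> bool" where
  "bimod \<iota>R \<iota>S X la ra \<longleftrightarrow>
     0 \<in> X \<and> (\<forall>x\<in>X. \<forall>y\<in>X. x + y \<in> X) \<and> (\<forall>x\<in>X. - x \<in> X)
   \<and> (\<forall>r. \<forall>x\<in>X. la r x \<in> X) \<and> (\<forall>s. \<forall>x\<in>X. ra x s \<in> X)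
   \<and> (\<forall>r r'. \<forall>x\<in>X. la (r + r') x = la r x + la r' x)
   \<and> (\<forall>r. \<forall>x\<in>X. \<forall>y\<in>X. la r (x + y) = la r x + la r y)
   \<and> (\<forall>r r'. \<forall>x\<in>X. la (r * r') x = la r (la r' x))
   \<and> (\<forall>x\<in>X. la 1 x = x)
   \<and> (\<forall>s s'. \<forall>x\<in>X. ra x (s + s') = ra x s + ra x s')
   \<and> (\<forall>s. \<forall>x\<in>X. \<forall>y\<in>X. ra (x + y) s = ra x s + ra y s)
   \<and> (\<forall>s s'. \<forall>x\<in>X. ra x (s * s') = ra (ra x s) s')
   \<and> (\<forall>x\<in>X. ra x 1 = x)
   \<and> (\<forall>r s. \<forall>x\<in>X. ra (la r x) s = la r (ra x s))
   \<and> (\<forall>c. \<forall>x\<in>X. la (\<iota>R c) x = ra x (\<iota>S c))"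

text \<open>Formal Z-linear combination (element of the free abelian group on pairs) given by a list of pairs.\<close>
definition formal :: "('x \<times> 'y) list \<Rightarrow> ('x \<times> 'y \<Rightarrow> int)" where
  "formal ps = (\<lambda>p. int (count_list ps p))"

text \<open>The subgroup of the free abelian group on X \<times> Y generated by the defining relations
  of the tensor product X \<otimes>_S Y.\<close>
inductive_set tens_rel :: "'x::ab_group_add set \<Rightarrow> 'y::ab_group_add set \<Rightarrow> ('x \<Rightarrow> 's \<Rightarrow> 'x)
    \<Rightarrow> ('s \<Rightarrow> 'y \<Rightarrow> 'y) \<Rightarrow> ('x \<times> 'y \<Rightarrow> int) set"
  for X Y ra la where
  zero: "(\<lambda>_. 0) \<in> tens_rel X Y ra la"
| addl: "\<lbrakk>x \<in> X; x' \<in> X; y \<in> Y\<rbrakk> \<Longrightarrow>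
     formal [(x + x', y)] - formal [(x, y)] - formal [(x', y)] \<in> tens_rel X Y ra la"
| addr: "\<lbrakk>x \<in> X; y \<in> Y; y' \<in> Y\<rbrakk> \<Longrightarrow>
     formal [(x, y + y')] - formal [(x, y)] - formal [(x, y')] \<in> tens_rel X Y ra la"
| bal: "\<lbrakk>x \<in> X; y \<in> Y\<rbrakk> \<Longrightarrow>
     formal [(ra x s, y)] - formal [(x, la s y)] \<in> tens_rel X Y ra la"
| plus: "\<lbrakk>u \<in> tens_rel X Y ra la; v \<in> tens_rel X Y ra la\<rbrakk> \<Longrightarrow> u + v \<in> tens_rel X Y ra la"
| neg: "u \<in> tens_rel X Y ra la \<Longrightarrow> - u \<in> tens_rel X Y ra la"

text \<open>For an (R,S)-bimodule X and an (S,T)-bimodule Y, tensor_iso says that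
  X \<otimes>_S Y (free abelian group on X \<times> Y modulo tens_rel) is isomorphic, as an (R,T)-bimodule,
  to the (R,T)-bimodule Z: there is a balanced biadditive bi-equivariant map beta whose induced
  map on the tensor product is bijective.\<close>
definition tensor_iso :: "'x::ab_group_add set \<Rightarrow> ('r \<Rightarrow> 'x \<Rightarrow> 'x) \<Rightarrow> ('x \<Rightarrow> 's \<Rightarrow> 'x)
    \<Rightarrow> 'y::ab_group_add set \<Rightarrow> ('s \<Rightarrow> 'y \<Rightarrow> 'y) \<Rightarrow> ('y \<Rightarrow> 't \<Rightarrow> 'y)
    \<Rightarrow> 'z::ab_group_add set \<Rightarrow> ('r \<Rightarrow> 'z \<Rightarrow> 'z) \<Rightarrow> ('z \<Rightarrow> 't \<Rightarrow> 'z) \<Rightarrow> bool" where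
  "tensor_iso X laX raX Y laY raY Z laZ raZ \<longleftrightarrow>
    (\<exists>\<beta> :: 'x \<Rightarrow> 'y \<Rightarrow> 'z.
       (\<forall>x\<in>X. \<forall>y\<in>Y. \<beta> x y \<in> Z)
     \<and> (\<forall>x\<in>X. \<forall>x'\<in>X. \<forall>y\<in>Y. \<beta> (x + x') y = \<beta> x y + \<beta> x' y)
     \<and> (\<forall>x\<in>X. \<forall>y\<in>Y. \<forall>y'\<in>Y. \<beta> x (y + y') = \<beta> x y + \<beta> x y')
     \<and> (\<forall>s. \<forall>x\<in>X. \<forall>y\<in>Y. \<beta> (raX x s) y = \<beta> x (laY s y))
     \<and> (\<forall>r. \<forall>x\<in>X. \<forall>y\<in>Y. \<beta> (laX r x) y = laZ r (\<beta> x y))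
     \<and> (\<forall>t. \<forall>x\<in>X. \<forall>y\<in>Y. \<beta> x (raY y t) = raZ (\<beta> x y) t)
     \<and> (\<forall>z\<in>Z. \<exists>ps. set ps \<subseteq> X \<times> Y \<and> z = (\<Sum>(x, y)\<leftarrow>ps. \<beta> x y))
     \<and> (\<forall>ps qs. set ps \<subseteq> X \<times> Y \<longrightarrow> set qs \<subseteq> X \<times> Y \<longrightarrow>
           (\<Sum>(x, y)\<leftarrow>ps. \<beta> x y) = (\<Sum>(x, y)\<leftarrow>qs. \<beta> x y) \<longrightarrow>
           formal ps - formal qs \<in> tens_rel X Y raX laY))"

definition alg_inverse :: "('k::comm_ring_1 \<Rightarrow> 'a::ring_1) \<Rightarrow> ('k \<Rightarrow> 'b::ring_1)
    \<Rightarrow> 'm::ab_group_add set \<Rightarrow> ('a \<Rightarrow> 'm \<Rightarrow> 'm) \<Rightarrow> ('m \<Rightarrow> 'b \<Rightarrow> 'm)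
    \<Rightarrow> 'n::ab_group_add set \<Rightarrow> ('b \<Rightarrow> 'n \<Rightarrow> 'n) \<Rightarrow> ('n \<Rightarrow> 'a \<Rightarrow> 'n) \<Rightarrow> bool" where
  "alg_inverse \<iota>A \<iota>B M laM raM N laN raN \<longleftrightarrow>
     bimod \<iota>B \<iota>A N laN raN
   \<and> tensor_iso M laM raM N laN raN (UNIV :: 'a set) (*) (*)
   \<and> tensor_iso N laN raN M laM raM (UNIV :: 'b set) (*) (*)"

text \<open>Invertibility in Alg of the morphism (iso class of) M, with the inverse taken from type 'n.\<close>
definition alg_invertible_in :: "'n::ab_group_add itself \<Rightarrow> ('k::comm_ring_1 \<Rightarrow> 'a::ring_1) \<Rightarrow> ('k \<Rightarrow> 'b::ring_1)
    \<Rightarrow> 'm::ab_group_add set \<Rightarrow> ('a \<Rightarrow> 'm \<Rightarrow> 'm) \<Rightarrow> ('m \<Rightarrow> 'b \<Rightarrow> 'm) \<Rightarrow> bool" where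
  "alg_invertible_in _ \<iota>A \<iota>B M laM raM \<longleftrightarrow>
     (\<exists>(N :: 'n set) laN raN. alg_inverse \<iota>A \<iota>B M laM raM N laN raN)"

text \<open>The modulation of f: the left ideal A f(1_B) with a x b = a x f(b).\<close>
definition modulation_carrier :: "('b::ring_1 \<Rightarrow> 'a::ring_1) \<Rightarrow> 'a set" where
  "modulation_carrier f = {a * f 1 | a. True}"

definition modulation_ract :: "('b::ring_1 \<Rightarrow> 'a::ring_1) \<Rightarrow> 'a \<Rightarrow> 'b \<Rightarrow> 'a" where
  "modulation_ract f x b = x * f b"

definition zero_divisor :: "'a::ring_1 \<Rightarrow> bool" where
  "zero_divisor z \<longleftrightarrow> (\<exists>a. a \<noteq> 0 \<and> (a * z = 0 \<or> z * a = 0))"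

end

(* An invertible bimodule is faithful on both sides: under either isomorphism
   M (x)_B N = A or N (x)_A M = B the unit is a finite sum of elementary tensors.
   If f(1) is central it is a central idempotent, and 1 - f(1) annihilates the left
   ideal M = A f(1); so f(1) = 1, M = A, and right faithfulness of A over B kills the
   kernel of f.  Since N (x)_A A = N, the map y |-> beta(y, 1) is a left B-linear
   bijection N -> B, so N is cyclic, generated by the preimage y0 of 1; for a in A the
   element f(beta(y0 a, 1)) - a annihilates y0, hence N, hence vanishes: f is onto.
   Conversely an idempotent that is not a zero divisor equals 1, so f is an
   isomorphism, and A with B acting through f is inverse to the modulation: both
   tensor products are computed by multiplication, every formal sum of tensors
   x_i (x) y_i being equivalent to the single tensor (sum x_i y_i) (x) 1. *)

theory Submission
  imports Defs "HOL-Library.Multiset"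
begin

lemma formal_Nil: "formal [] = 0"
  by (simp add: formal_def fun_eq_iff)

lemma formal_Cons: "formal (p # ps) = formal [p] + formal ps"
  by (auto simp: formal_def fun_eq_iff)

lemma formal_append: "formal (ps @ qs) = formal ps + formal qs"
  by (auto simp: formal_def fun_eq_iff)

lemma formal_eq_iff_mset: "formal ps = formal qs \<longleftrightarrow> mset ps = mset qs"
  by (auto simp: formal_def fun_eq_iff multiset_eq_iff count_mset)

lemma tens_rel_diff:
  "u \<in> tens_rel X Y ra la \<Longrightarrow> v \<in> tens_rel X Y ra la \<Longrightarrow> u - v \<in> tens_rel X Y ra la"
  using tens_rel.plus[OF _ tens_rel.neg, of u X Y ra la v] by simp

lemma tens_rel_formal_diff_sum_eq:
  fixes \<Phi> :: "'x::ab_group_add \<Rightarrow> 'y::ab_group_add \<Rightarrow> 'g::ab_group_add"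
  assumes "u \<in> tens_rel X Y ra la"
    and add_left: "\<And>x x' y. \<lbrakk>x \<in> X; x' \<in> X; y \<in> Y\<rbrakk> \<Longrightarrow> \<Phi> (x + x') y = \<Phi> x y + \<Phi> x' y"
    and add_right: "\<And>x y y'. \<lbrakk>x \<in> X; y \<in> Y; y' \<in> Y\<rbrakk> \<Longrightarrow> \<Phi> x (y + y') = \<Phi> x y + \<Phi> x y'"
    and balanced: "\<And>s x y. \<lbrakk>x \<in> X; y \<in> Y\<rbrakk> \<Longrightarrow> \<Phi> (ra x s) y = \<Phi> x (la s y)"
  shows "\<exists>ps qs. u = formal ps - formal qs \<and> (\<Sum>(x, y)\<leftarrow>ps. \<Phi> x y) = (\<Sum>(x, y)\<leftarrow>qs. \<Phi> x y)"
  using assms(1)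
proof (induction rule: tens_rel.induct)
  case zero
  have "(\<lambda>_. 0) = formal [] - formal []"
    by (simp add: formal_Nil zero_fun_def)
  then show ?case by blast
next
  case (addl x x' y)
  then show ?case
    by (intro exI[of _ "[(x + x', y)]"] exI[of _ "[(x, y), (x', y)]"])
      (simp add: add_left formal_Cons[of _ "[_]"] fun_eq_iff)
next
  case (addr x y y')
  then show ?case
    by (intro exI[of _ "[(x, y + y')]"] exI[of _ "[(x, y), (x, y')]"])
      (simp add: add_right formal_Cons[of _ "[_]"] fun_eq_iff)
next
  case (bal x y s)
  then show ?case
    by (intro exI[of _ "[(ra x s, y)]"] exI[of _ "[(x, la s y)]"]) (simp add: balanced)
next
  case (plus u v)
  then obtain ps qs ps' qs' where
      u: "u = formal ps - formal qs" "(\<Sum>(x, y)\<leftarrow>ps. \<Phi> x y) = (\<Sum>(x, y)\<leftarrow>qs. \<Phi> x y)"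
      and v: "v = formal ps' - formal qs'" "(\<Sum>(x, y)\<leftarrow>ps'. \<Phi> x y) = (\<Sum>(x, y)\<leftarrow>qs'. \<Phi> x y)"
    by blast
  have "u + v = formal (ps @ ps') - formal (qs @ qs')"
    unfolding u v formal_append by (simp add: algebra_simps)
  with u v show ?case
    by (intro exI[of _ "ps @ ps'"] exI[of _ "qs @ qs'"]) simp
next
  case (neg u)
  then obtain ps qs where
      "u = formal ps - formal qs" "(\<Sum>(x, y)\<leftarrow>ps. \<Phi> x y) = (\<Sum>(x, y)\<leftarrow>qs. \<Phi> x y)"
    by blast
  then show ?case
    by (intro exI[of _ qs] exI[of _ ps]) simp
qed

lemma sum_list_eq_if_formal_eq:
  assumes "formal ps = formal qs"
  shows "(\<Sum>(x, y)\<leftarrow>ps. (\<Phi> x y :: 'g::ab_group_add)) = (\<Sum>(x, y)\<leftarrow>qs. \<Phi> x y)"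
proof -
  have "mset ps = mset qs"
    using assms by (simp only: formal_eq_iff_mset)
  then show ?thesis
    by (metis mset_map sum_mset_sum_list)
qed

lemma tens_rel_sum_eq:
  fixes \<Phi> :: "'x::ab_group_add \<Rightarrow> 'y::ab_group_add \<Rightarrow> 'g::ab_group_add"
  assumes "formal ps - formal qs \<in> tens_rel X Y ra la"
    and "\<And>x x' y. \<lbrakk>x \<in> X; x' \<in> X; y \<in> Y\<rbrakk> \<Longrightarrow> \<Phi> (x + x') y = \<Phi> x y + \<Phi> x' y"
    and "\<And>x y y'. \<lbrakk>x \<in> X; y \<in> Y; y' \<in> Y\<rbrakk> \<Longrightarrow> \<Phi> x (y + y') = \<Phi> x y + \<Phi> x y'"
    and "\<And>s x y. \<lbrakk>x \<in> X; y \<in> Y\<rbrakk> \<Longrightarrow> \<Phi> (ra x s) y = \<Phi> x (la s y)"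
  shows "(\<Sum>(x, y)\<leftarrow>ps. \<Phi> x y) = (\<Sum>(x, y)\<leftarrow>qs. \<Phi> x y)"
proof -
  obtain ps' qs' where diff: "formal ps - formal qs = formal ps' - formal qs'"
    and sum: "(\<Sum>(x, y)\<leftarrow>ps'. \<Phi> x y) = (\<Sum>(x, y)\<leftarrow>qs'. \<Phi> x y)"
    using tens_rel_formal_diff_sum_eq[where \<Phi> = \<Phi>, OF assms] by blast
  have formal_eq: "formal (ps @ qs') = formal (ps' @ qs)"
    unfolding formal_append using diff by (simp add: algebra_simps)
  have "(\<Sum>(x, y)\<leftarrow>ps. \<Phi> x y) + (\<Sum>(x, y)\<leftarrow>qs'. \<Phi> x y)
      = (\<Sum>(x, y)\<leftarrow>ps'. \<Phi> x y) + (\<Sum>(x, y)\<leftarrow>qs. \<Phi> x y)"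
    using sum_list_eq_if_formal_eq[OF formal_eq, of \<Phi>] by simp
  then show ?thesis
    unfolding sum by (simp add: add.commute)
qed

locale tensor_iso_map =
  fixes \<beta> :: "'x::ab_group_add \<Rightarrow> 'y::ab_group_add \<Rightarrow> 'z::ab_group_add"
    and X :: "'x set" and laX :: "'r \<Rightarrow> 'x \<Rightarrow> 'x" and raX :: "'x \<Rightarrow> 's \<Rightarrow> 'x"
    and Y :: "'y set" and laY :: "'s \<Rightarrow> 'y \<Rightarrow> 'y" and raY :: "'y \<Rightarrow> 't \<Rightarrow> 'y"
    and Z :: "'z set" and laZ :: "'r \<Rightarrow> 'z \<Rightarrow> 'z" and raZ :: "'z \<Rightarrow> 't \<Rightarrow> 'z"
  assumes closed: "\<And>x y. \<lbrakk>x \<in> X; y \<in> Y\<rbrakk> \<Longrightarrow> \<beta> x y \<in> Z"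
    and add_left: "\<And>x x' y. \<lbrakk>x \<in> X; x' \<in> X; y \<in> Y\<rbrakk> \<Longrightarrow> \<beta> (x + x') y = \<beta> x y + \<beta> x' y"
    and add_right: "\<And>x y y'. \<lbrakk>x \<in> X; y \<in> Y; y' \<in> Y\<rbrakk> \<Longrightarrow> \<beta> x (y + y') = \<beta> x y + \<beta> x y'"
    and balanced: "\<And>x y. \<lbrakk>x \<in> X; y \<in> Y\<rbrakk> \<Longrightarrow> \<beta> (raX x s) y = \<beta> x (laY s y)"
    and left_linear: "\<And>x y. \<lbrakk>x \<in> X; y \<in> Y\<rbrakk> \<Longrightarrow> \<beta> (laX r x) y = laZ r (\<beta> x y)"
    and right_linear: "\<And>x y. \<lbrakk>x \<in> X; y \<in> Y\<rbrakk> \<Longrightarrow> \<beta> x (raY y t) = raZ (\<beta> x y) t"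
    and spanning: "\<And>z. z \<in> Z \<Longrightarrow> \<exists>ps. set ps \<subseteq> X \<times> Y \<and> z = (\<Sum>(x, y)\<leftarrow>ps. \<beta> x y)"
    and relations: "\<And>ps qs. \<lbrakk>set ps \<subseteq> X \<times> Y; set qs \<subseteq> X \<times> Y;
       (\<Sum>(x, y)\<leftarrow>ps. \<beta> x y) = (\<Sum>(x, y)\<leftarrow>qs. \<beta> x y)\<rbrakk>
       \<Longrightarrow> formal ps - formal qs \<in> tens_rel X Y raX laY"
begin

lemma zero_left: "0 \<in> X \<Longrightarrow> y \<in> Y \<Longrightarrow> \<beta> 0 y = 0"
  using add_left[of 0 0 y] by simp

lemma zero_right: "x \<in> X \<Longrightarrow> 0 \<in> Y \<Longrightarrow> \<beta> x 0 = 0"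
  using add_right[of x 0 0] by simp

end

lemma tensor_iso_iff_tensor_iso_map:
  "tensor_iso X laX raX Y laY raY Z laZ raZ \<longleftrightarrow>
     (\<exists>\<beta>. tensor_iso_map \<beta> X laX raX Y laY raY Z laZ raZ)"
  unfolding tensor_iso_def tensor_iso_map_def by (simp add: Ball_def conj_assoc)

lemma tensor_iso_map_faithful_left:
  fixes \<gamma> :: "'x::ab_group_add \<Rightarrow> 'y::ab_group_add \<Rightarrow> 'a::ring_1"
  assumes "tensor_iso_map \<gamma> X laX raX Y laY raY UNIV (*) (*)"
    and "0 \<in> X" and annihilates: "\<And>x. x \<in> X \<Longrightarrow> laX r x = 0"
  shows "r = 0"
proof -
  interpret tensor_iso_map \<gamma> X laX raX Y laY raY UNIV "(*)" "(*)" by fact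
  obtain ps where ps: "set ps \<subseteq> X \<times> Y" and one: "1 = (\<Sum>(x, y)\<leftarrow>ps. \<gamma> x y)"
    using spanning by blast
  have "r = r * (\<Sum>(x, y)\<leftarrow>ps. \<gamma> x y)"
    using one by simp
  also have "\<dots> = (\<Sum>(x, y)\<leftarrow>ps. r * \<gamma> x y)"
    by (simp add: sum_list_const_mult[symmetric] split_def)
  also have "\<dots> = (\<Sum>_\<leftarrow>ps. 0)"
    using ps by (intro arg_cong[where f = sum_list] map_cong)
      (auto simp: left_linear[symmetric] annihilates zero_left \<open>0 \<in> X\<close>)
  finally show ?thesis by simp
qed

lemma tensor_iso_map_faithful_right:
  fixes \<gamma> :: "'x::ab_group_add \<Rightarrow> 'y::ab_group_add \<Rightarrow> 'a::ring_1"
  assumes "tensor_iso_map \<gamma> X laX raX Y laY raY UNIV (*) (*)"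
    and "0 \<in> Y" and annihilates: "\<And>y. y \<in> Y \<Longrightarrow> raY y t = 0"
  shows "t = 0"
proof -
  interpret tensor_iso_map \<gamma> X laX raX Y laY raY UNIV "(*)" "(*)" by fact
  obtain ps where ps: "set ps \<subseteq> X \<times> Y" and one: "1 = (\<Sum>(x, y)\<leftarrow>ps. \<gamma> x y)"
    using spanning by blast
  have "t = (\<Sum>(x, y)\<leftarrow>ps. \<gamma> x y) * t"
    using one by simp
  also have "\<dots> = (\<Sum>(x, y)\<leftarrow>ps. \<gamma> x y * t)"
    by (simp add: sum_list_mult_const[symmetric] split_def)
  also have "\<dots> = (\<Sum>_\<leftarrow>ps. 0)"
    using ps by (intro arg_cong[where f = sum_list] map_cong)
      (auto simp: right_linear[symmetric] annihilates zero_right \<open>0 \<in> Y\<close>)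
  finally show ?thesis by simp
qed

lemma tensor_iso_map_unit_bij:
  fixes \<beta> :: "'n::ab_group_add \<Rightarrow> 'a::ring_1 \<Rightarrow> 'z::ab_group_add"
    and raN :: "'n \<Rightarrow> 'a \<Rightarrow> 'n"
  assumes "bimod \<iota>B \<iota>A N laN raN"
    and "tensor_iso_map \<beta> N laN raN UNIV (*) raM Z laZ raZ"
  shows "bij_betw (\<lambda>y. \<beta> y 1) N Z"
proof -
  interpret tensor_iso_map \<beta> N laN raN UNIV "(*)" raM Z laZ raZ by fact
  from assms(1) have N_zero: "0 \<in> N" and N_add: "\<And>y y'. y \<in> N \<Longrightarrow> y' \<in> N \<Longrightarrow> y + y' \<in> N"
    and N_ract: "\<And>y a. y \<in> N \<Longrightarrow> raN y a \<in> N"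
    and ract_add_left: "\<And>y y' a. y \<in> N \<Longrightarrow> y' \<in> N \<Longrightarrow> raN (y + y') a = raN y a + raN y' a"
    and ract_add_right: "\<And>y a a'. y \<in> N \<Longrightarrow> raN y (a + a') = raN y a + raN y a'"
    and ract_mult: "\<And>y a a'. y \<in> N \<Longrightarrow> raN (raN y a) a' = raN y (a * a')"
    and ract_one: "\<And>y. y \<in> N \<Longrightarrow> raN y 1 = y"
    unfolding bimod_def by auto
  have "inj_on (\<lambda>y. \<beta> y 1) N"
  proof (rule inj_onI)
    fix y y' assume "y \<in> N" "y' \<in> N" "\<beta> y 1 = \<beta> y' 1"
    then have "formal [(y, 1)] - formal [(y', 1)] \<in> tens_rel N UNIV raN (*)"
      by (intro relations) auto
    then have "(\<Sum>(x, a)\<leftarrow>[(y, 1)]. raN x a) = (\<Sum>(x, a)\<leftarrow>[(y', 1)]. raN x a)"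
      by (rule tens_rel_sum_eq) (simp_all add: ract_add_left ract_add_right ract_mult)
    then show "y = y'"
      using ract_one \<open>y \<in> N\<close> \<open>y' \<in> N\<close> by simp
  qed
  moreover have "Z \<subseteq> (\<lambda>y. \<beta> y 1) ` N"
  proof
    fix z assume "z \<in> Z"
    then obtain ps where ps: "set ps \<subseteq> N \<times> UNIV" and z: "z = (\<Sum>(y, a)\<leftarrow>ps. \<beta> y a)"
      using spanning by blast
    have "(\<Sum>(y, a)\<leftarrow>ps. raN y a) \<in> N \<and> (\<Sum>(y, a)\<leftarrow>ps. \<beta> y a) = \<beta> (\<Sum>(y, a)\<leftarrow>ps. raN y a) 1"
      using ps
    proof (induction ps)
      case Nil
      then show ?case
        using N_zero zero_left by simp
    next
      case (Cons p ps)
      obtain y a where p: "p = (y, a)" by fastforce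
      with Cons have "y \<in> N" by auto
      with Cons p show ?case
        using N_ract N_add add_left balanced[of y 1 a] by auto
    qed
    with z show "z \<in> (\<lambda>y. \<beta> y 1) ` N" by auto
  qed
  ultimately show ?thesis
    using closed by (auto simp: bij_betw_def)
qed

lemma tens_rel_normal_form:
  fixes \<phi> :: "'s \<Rightarrow> 'a::ring_1"
  assumes "surj \<phi>" and raX: "\<And>x s. raX x s = x * \<phi> s" and laY: "\<And>s y. laY s y = \<phi> s * y"
  shows "formal ps - formal [(\<Sum>(x, y)\<leftarrow>ps. x * y, 1)] \<in> tens_rel UNIV UNIV raX laY"
proof (induction ps)
  case Nil
  have "formal [(0 + 0, 1)] - formal [(0, 1)] - formal [(0, 1)] \<in> tens_rel UNIV UNIV raX laY"
    by (rule tens_rel.addl) auto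
  moreover have "formal [(0 + 0, 1)] - formal [(0, 1)] - formal [(0, 1)]
      = formal [] - formal [(\<Sum>(x, y)\<leftarrow>[]. x * y, 1 :: 'a)]"
    by (simp add: formal_Nil)
  ultimately show ?case
    by metis
next
  case (Cons p ps)
  obtain x y where p: "p = (x, y)" by fastforce
  obtain s where s: "\<phi> s = y" using \<open>surj \<phi>\<close> by (metis surjD)
  define S where "S = (\<Sum>(x, y)\<leftarrow>ps. x * y)"
  have bal: "formal [(x * y, 1)] - formal [(x, y)] \<in> tens_rel UNIV UNIV raX laY"
    using tens_rel.bal[of x UNIV 1 UNIV raX s laY] by (simp add: raX laY s)
  have add: "formal [(x * y + S, 1)] - formal [(x * y, 1)] - formal [(S, 1)] \<in> tens_rel UNIV UNIV raX laY"
    by (rule tens_rel.addl) auto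
  have "formal (p # ps) - formal [(\<Sum>(x, y)\<leftarrow>p # ps. x * y, 1)]
      = (formal ps - formal [(S, 1)]) - (formal [(x * y, 1)] - formal [(x, y)])
        - (formal [(x * y + S, 1)] - formal [(x * y, 1)] - formal [(S, 1)])"
    by (simp add: p S_def formal_Cons[of _ ps] algebra_simps)
  moreover have "formal ps - formal [(S, 1)] \<in> tens_rel UNIV UNIV raX laY"
    using Cons.IH unfolding S_def .
  ultimately show ?case
    using bal add by (metis tens_rel_diff)
qed

lemma tensor_iso_map_mult:
  fixes \<phi> :: "'s \<Rightarrow> 'a::ring_1" and c :: "'a \<Rightarrow> 'z::ab_group_add"
  assumes "surj \<phi>" and raX: "\<And>x s. raX x s = x * \<phi> s" and laY: "\<And>s y. laY s y = \<phi> s * y"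
    and "bij c" and c_add: "\<And>x y. c (x + y) = c x + c y"
    and left: "\<And>r x y. c (laX r x * y) = laZ r (c (x * y))"
    and right: "\<And>t x y. c (x * raY y t) = raZ (c (x * y)) t"
  shows "tensor_iso_map (\<lambda>x y. c (x * y)) UNIV laX raX UNIV laY raY UNIV laZ raZ"
proof unfold_locales
  fix z
  have "z = c (inv c z * 1)"
    using \<open>bij c\<close> by (simp add: bij_is_surj surj_f_inv_f)
  then show "\<exists>ps. set ps \<subseteq> UNIV \<times> UNIV \<and> z = (\<Sum>(x, y)\<leftarrow>ps. c (x * y))"
    by (intro exI[of _ "[(inv c z, 1)]"]) simp
next
  fix ps qs :: "('a \<times> 'a) list"
  have c_zero: "c 0 = 0"
    using c_add[of 0 0] by simp
  have c_sum: "(\<Sum>(x, y)\<leftarrow>ps. c (x * y)) = c (\<Sum>(x, y)\<leftarrow>ps. x * y)" for ps :: "('a \<times> 'a) list"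
    by (induction ps) (auto simp: c_zero c_add)
  assume "(\<Sum>(x, y)\<leftarrow>ps. c (x * y)) = (\<Sum>(x, y)\<leftarrow>qs. c (x * y))"
  then have "(\<Sum>(x, y)\<leftarrow>ps. x * y) = (\<Sum>(x, y)\<leftarrow>qs. x * y)"
    using \<open>bij c\<close> by (simp add: c_sum bij_is_inj inj_eq)
  then have "formal ps - formal qs
      = (formal ps - formal [(\<Sum>(x, y)\<leftarrow>ps. x * y, 1)]) - (formal qs - formal [(\<Sum>(x, y)\<leftarrow>qs. x * y, 1)])"
    by simp
  then show "formal ps - formal qs \<in> tens_rel UNIV UNIV raX laY"
    using tens_rel_normal_form[OF \<open>surj \<phi>\<close> raX laY] tens_rel_diff by metis
qed (simp_all add: c_add left right raX laY distrib_left distrib_right mult.assoc)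

lemma idempotent_eq_one_if_not_zero_divisor:
  fixes e :: "'a::ring_1"
  assumes "e * e = e" and "\<not> zero_divisor e"
  shows "e = 1"
proof -
  have "e * (1 - e) = 0"
    using assms(1) by (simp add: right_diff_distrib)
  then show ?thesis
    using assms(2) unfolding zero_divisor_def by force
qed

lemma central_idempotent_eq_one_if_tensor_iso_map:
  fixes e :: "'a::ring_1"
  assumes "tensor_iso_map \<gamma> {a * e |a. True} (*) raX Y laY raY UNIV (*) (*)"
    and idem: "e * e = e" and central: "\<And>a. e * a = a * e"
  shows "e = 1"
proof -
  have "1 - e = 0"
  proof (rule tensor_iso_map_faithful_left[OF assms(1)])
    have "0 = 0 * e" by simp
    then show "0 \<in> {a * e |a. True}" by blast
  next
    fix x assume "x \<in> {a * e |a. True}"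
    then obtain a where x: "x = a * e" by blast
    have "e * (a * e) = a * (e * e)"
      by (simp only: central[of a] mult.assoc[symmetric])
    then show "(1 - e) * x = 0"
      by (simp add: x idem left_diff_distrib)
  qed
  then show ?thesis by simp
qed

lemma inj_if_tensor_iso_map:
  fixes f :: "'b::ring_1 \<Rightarrow> 'a::ring_1" and \<beta> :: "'n::ab_group_add \<Rightarrow> 'a \<Rightarrow> 'b"
  assumes "tensor_iso_map \<beta> N laN raN M laM (\<lambda>x b. x * f b) UNIV (*) (*)"
    and "0 \<in> M" and f_add: "\<And>x y. f (x + y) = f x + f y"
  shows "inj f"
proof (rule injI)
  have kernel: "b = 0" if "f b = 0" for b
    using tensor_iso_map_faithful_right[OF assms(1,2), of b] that by simp
  fix x y assume "f x = f y"
  moreover have "f x = f (x - y) + f y"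
    using f_add[of "x - y" y] by simp
  ultimately show "x = y"
    using kernel[of "x - y"] by simp
qed

lemma surj_if_tensor_iso_maps:
  fixes f :: "'b::ring_1 \<Rightarrow> 'a::ring_1" and \<gamma> :: "'x::ab_group_add \<Rightarrow> 'n::ab_group_add \<Rightarrow> 'a"
    and \<beta> :: "'n \<Rightarrow> 'a \<Rightarrow> 'b"
  assumes N: "bimod \<iota>B \<iota>A N laN raN"
    and \<gamma>: "tensor_iso_map \<gamma> X laX raX N laN raN UNIV (*) (*)"
    and \<beta>: "tensor_iso_map \<beta> N laN raN UNIV (*) (\<lambda>x b. x * f b) UNIV (*) (*)"
  shows "surj f"
proof -
  interpret \<beta>: tensor_iso_map \<beta> N laN raN UNIV "(*)" "\<lambda>x b. x * f b" UNIV "(*)" "(*)" by fact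
  from N have N_zero: "0 \<in> N" and N_lact: "\<And>b y. y \<in> N \<Longrightarrow> laN b y \<in> N"
    and N_ract: "\<And>y a. y \<in> N \<Longrightarrow> raN y a \<in> N"
    and lact_add: "\<And>b y y'. y \<in> N \<Longrightarrow> y' \<in> N \<Longrightarrow> laN b (y + y') = laN b y + laN b y'"
    and ract_add: "\<And>y a a'. y \<in> N \<Longrightarrow> raN y (a + a') = raN y a + raN y a'"
    and ract_lact: "\<And>b a y. y \<in> N \<Longrightarrow> raN (laN b y) a = laN b (raN y a)"
    unfolding bimod_def by auto
  have lact_zero: "laN b 0 = 0" for b
    using lact_add[OF N_zero N_zero, of b] by simp
  have unit: "bij_betw (\<lambda>y. \<beta> y 1) N UNIV"
    by (rule tensor_iso_map_unit_bij[OF N \<beta>])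
  then have unit_inj: "y = y'" if "y \<in> N" "y' \<in> N" "\<beta> y 1 = \<beta> y' 1" for y y'
    using that by (auto simp: bij_betw_def inj_on_def)
  have "1 \<in> (\<lambda>y. \<beta> y 1) ` N"
    using unit by (simp add: bij_betw_def)
  then obtain y0 where y0: "y0 \<in> N" "\<beta> y0 1 = 1"
    by force
  have generates: "y = laN (\<beta> y 1) y0" if "y \<in> N" for y
    using unit_inj[OF that N_lact[OF y0(1)]] \<beta>.left_linear[OF y0(1), of 1 "\<beta> y 1"] y0 by simp
  show "surj f"
  proof (rule surjI[of _ "\<lambda>a. \<beta> (raN y0 a) 1"])
    fix a
    \<comment> \<open>b is a acting on 1 through the right A-action transported to B along the unit bijection\<close>
    define b where "b = \<beta> (raN y0 a) 1"
    have "\<beta> (raN y0 (f b)) 1 = \<beta> y0 1 * b"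
      using \<beta>.balanced[OF y0(1), of 1 "f b"] \<beta>.right_linear[OF y0(1), of 1 b] by simp
    then have "raN y0 (f b) = raN y0 a"
      using unit_inj N_ract y0 by (simp add: b_def)
    then have "raN y0 (f b - a) = 0"
      using ract_add[OF y0(1), of "f b - a" a] by simp
    have "raN y (f b - a) = 0" if "y \<in> N" for y
    proof -
      have "raN y (f b - a) = raN (laN (\<beta> y 1) y0) (f b - a)"
        using generates[OF that] by (rule arg_cong)
      also have "\<dots> = 0"
        using ract_lact[OF y0(1)] lact_zero \<open>raN y0 (f b - a) = 0\<close> by simp
      finally show ?thesis .
    qed
    then have "f b - a = 0"
      by (rule tensor_iso_map_faithful_right[OF \<gamma> N_zero])
    then show "f (\<beta> (raN y0 a) 1) = a"
      by (simp add: b_def)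
  qed
qed

lemma modulation_invertible_imp_iso:
  fixes \<iota>A :: "'k::comm_ring_1 \<Rightarrow> 'a::ring_1" and \<iota>B :: "'k \<Rightarrow> 'b::ring_1" and f :: "'b \<Rightarrow> 'a"
  assumes hom: "alg_hom_nonunital \<iota>A \<iota>B f" and central: "\<forall>a. f 1 * a = a * f 1"
    and "alg_invertible_in TYPE('n::ab_group_add) \<iota>A \<iota>B (modulation_carrier f) (*) (modulation_ract f)"
  shows "inj f \<and> range f = modulation_carrier f \<and> \<not> zero_divisor (f 1)"
proof -
  have f_add: "\<And>x y. f (x + y) = f x + f y" and f_mult: "\<And>x y. f (x * y) = f x * f y"
    using hom by (simp_all add: alg_hom_nonunital_def)
  obtain N :: "'n set" and laN raN \<gamma> \<beta> where N: "bimod \<iota>B \<iota>A N laN raN"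
    and \<gamma>: "tensor_iso_map \<gamma> (modulation_carrier f) (*) (modulation_ract f) N laN raN UNIV (*) (*)"
    and \<beta>: "tensor_iso_map \<beta> N laN raN (modulation_carrier f) (*) (modulation_ract f) UNIV (*) (*)"
    using assms(3) unfolding alg_invertible_in_def alg_inverse_def tensor_iso_iff_tensor_iso_map
    by blast
  have idem: "f 1 * f 1 = f 1"
    using f_mult[of 1 1] by simp
  have "f 1 = 1"
    using central_idempotent_eq_one_if_tensor_iso_map[OF \<gamma>[unfolded modulation_carrier_def] idem]
      central by blast
  then have M: "modulation_carrier f = UNIV"
    by (auto simp: modulation_carrier_def)
  have ract: "modulation_ract f = (\<lambda>x b. x * f b)"
    by (simp add: modulation_ract_def fun_eq_iff)
  have "inj f"
    using inj_if_tensor_iso_map[OF \<beta>[unfolded M ract]] f_add by simp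
  moreover have "surj f"
    using surj_if_tensor_iso_maps[OF N \<gamma>[unfolded M ract] \<beta>[unfolded M ract]] .
  moreover have "\<not> zero_divisor (f 1)"
    using \<open>f 1 = 1\<close> by (simp add: zero_divisor_def)
  ultimately show ?thesis
    using M by simp
qed

lemma bimod_via_unital_hom:
  assumes "k_algebra \<iota>A" and "alg_hom_nonunital \<iota>A \<iota>B f" and "f 1 = 1"
  shows "bimod \<iota>B \<iota>A UNIV (\<lambda>b y. f b * y) (*)"
proof -
  have "f (\<iota>B c) = \<iota>A c" for c
    using assms(2,3) unfolding alg_hom_nonunital_def by (metis mult.right_neutral)
  then show ?thesis
    using assms unfolding bimod_def k_algebra_def alg_hom_nonunital_def
    by (simp add: algebra_simps)
qed

lemma iso_imp_modulation_invertible: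
  fixes \<iota>A :: "'k::comm_ring_1 \<Rightarrow> 'a::ring_1" and \<iota>B :: "'k \<Rightarrow> 'b::ring_1" and f :: "'b \<Rightarrow> 'a"
  assumes "k_algebra \<iota>A" and hom: "alg_hom_nonunital \<iota>A \<iota>B f"
    and "inj f" and "range f = modulation_carrier f" and "\<not> zero_divisor (f 1)"
  shows "alg_invertible_in TYPE('a) \<iota>A \<iota>B (modulation_carrier f) (*) (modulation_ract f)"
proof -
  have f_add: "\<And>x y. f (x + y) = f x + f y" and f_mult: "\<And>x y. f (x * y) = f x * f y"
    using hom by (simp_all add: alg_hom_nonunital_def)
  have "f 1 * f 1 = f 1"
    using f_mult[of 1 1] by simp
  then have "f 1 = 1"
    using idempotent_eq_one_if_not_zero_divisor assms(5) by blast
  then have M: "modulation_carrier f = UNIV"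
    by (auto simp: modulation_carrier_def)
  with assms(3,4) have "bij f"
    by (simp add: bij_def)
  then have f_inv: "f (inv f a) = a" and inv_f: "inv f (f b) = b" for a b
    by (simp_all add: bij_is_surj bij_is_inj surj_f_inv_f)
  have inv_add: "inv f (x + y) = inv f x + inv f y" for x y
    by (metis f_add f_inv inv_f)
  have inv_mult: "inv f (x * y) = inv f x * inv f y" for x y
    by (metis f_mult f_inv inv_f)
  have "tensor_iso_map (\<lambda>x y. id (x * y)) UNIV (*) (modulation_ract f) UNIV (\<lambda>b y. f b * y) (*)
      UNIV (*) (*)"
    using \<open>bij f\<close>
    by (intro tensor_iso_map_mult[where \<phi> = f])
      (simp_all add: modulation_ract_def bij_is_surj mult.assoc id_def[symmetric])
  moreover have "tensor_iso_map (\<lambda>x y. inv f (x * y)) UNIV (\<lambda>b y. f b * y) (*) UNIV (*)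
      (modulation_ract f) UNIV (*) (*)"
    using \<open>bij f\<close>
    by (intro tensor_iso_map_mult[where \<phi> = id])
      (simp_all add: modulation_ract_def bij_imp_bij_inv inv_add inv_mult inv_f mult.assoc)
  ultimately show ?thesis
    unfolding alg_invertible_in_def alg_inverse_def M tensor_iso_iff_tensor_iso_map
    using bimod_via_unital_hom[OF assms(1) hom \<open>f 1 = 1\<close>] by blast
qed

theorem lemma2p3:
  fixes \<iota>A :: "'k::comm_ring_1 \<Rightarrow> 'a::ring_1" and \<iota>B :: "'k \<Rightarrow> 'b::ring_1" and f :: "'b \<Rightarrow> 'a"
  assumes "k_algebra \<iota>A" and "k_algebra \<iota>B"
    and "alg_hom_nonunital \<iota>A \<iota>B f"
    and "\<forall>a. f 1 * a = a * f 1"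
  shows "(alg_invertible_in TYPE('n::ab_group_add) \<iota>A \<iota>B (modulation_carrier f) (*) (modulation_ract f)
            \<longrightarrow> inj f \<and> range f = modulation_carrier f \<and> \<not> zero_divisor (f 1))
       \<and> (inj f \<and> range f = modulation_carrier f \<and> \<not> zero_divisor (f 1)
            \<longrightarrow> alg_invertible_in TYPE('a) \<iota>A \<iota>B (modulation_carrier f) (*) (modulation_ract f))"
  using modulation_invertible_imp_iso[OF assms(3,4)] iso_imp_modulation_invertible[OF assms(1,3)]
  by blast

end
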